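(* Let $G$ be a signed digraph with vertex set $V$, $f$ a Boolean network on $G$, $i\in V$ and $a\in\{0,1\}$. Let $w$ be a canalizing word from $(i,a)$ with image $b$, and suppose no source of $G$ belongs to $\{w\}$. Then for every $j\in\{w\}$, $G$ has a path from $i$ to $j$ whose internal vertices are in $\{w\}$, which is positive if $a=b_j$ and negative otherwise.
   Context: A signed digraph on $V$ is $(V,E)$ with $E\subseteq V\times V\times\{-1,1\}$. Paths have no repeated vertices and are signed by the product of arc signs. A source is a vertex of in-degree zero. A Boolean network (BN) is $f:\{0,1\}^V\to\{0,1\}^V$; its signed interaction digraph has a positive (negative) arc from $j$ to $k$ iff for some $x$ with $x_j=0$, $f_k(x+e_j)-f_k(x)$ is positive (negative). A BN on $G$ is one whose signed interaction digraph is $G$. $f^k(x)$ is $x$ with $x_k$ replaced by $f_k(x)$; $f^{i_1\cdots i_\ell}=f^{i_\ell}\circ\cdots\circ f^{i_1}$; $\{w\}$ is the set of letters of $w$. A canalizing word from $(i,a)$ is a word $w$ over $V\setminus\{i\}$ without repeated letters such that for some configuration $b$ on $\{w\}$ (called the image of $w$), every $x\in\{0,1\}^V$ with $x_i=a$ satisfies $f^w(x)_{\{w\}}=b$. *)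

theory Defs
  imports Main
begin

text \<open>Vertices range over a finite type 'v (the vertex set V is UNIV).
  Boolean states are encoded as bool (False = 0, True = 1).\<close>

type_synonym 'v sdigraph = "('v \<times> 'v \<times> int) set"
type_synonym 'v config = "'v \<Rightarrow> bool"
type_synonym 'v bn = "'v config \<Rightarrow> 'v config"

definition signed_digraph :: "'v sdigraph \<Rightarrow> bool" where
  "signed_digraph E \<longleftrightarrow> (\<forall>(u, v, s) \<in> E. s = 1 \<or> s = -1)"

text \<open>Signed interaction digraph of a BN: positive arc j\<rightarrow>k iff for some x with x_j = 0,
  f_k(x + e_j) - f_k(x) > 0 (i.e. f_k goes 0 \<rightarrow> 1); negative iff it is < 0.\<close>
definition interaction_digraph :: "'v bn \<Rightarrow> 'v sdigraph" where
  "interaction_digraph f =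
     {(j, k, 1) | j k. \<exists>x. \<not> x j \<and> \<not> f x k \<and> f (x(j := True)) k} \<union>
     {(j, k, -1) | j k. \<exists>x. \<not> x j \<and> f x k \<and> \<not> f (x(j := True)) k}"

definition bn_on :: "'v bn \<Rightarrow> 'v sdigraph \<Rightarrow> bool" where
  "bn_on f E \<longleftrightarrow> interaction_digraph f = E"

definition is_source :: "'v sdigraph \<Rightarrow> 'v \<Rightarrow> bool" where
  "is_source E k \<longleftrightarrow> \<not> (\<exists>u s. (u, k, s) \<in> E)"

definition is_path :: "'v sdigraph \<Rightarrow> 'v list \<Rightarrow> int list \<Rightarrow> bool" where
  "is_path E vs ss \<longleftrightarrow> vs \<noteq> [] \<and> distinct vs \<and> length vs = Suc (length ss) \<and>
     (\<forall>l < length ss. (vs ! l, vs ! Suc l, ss ! l) \<in> E)"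

definition path_sign :: "int list \<Rightarrow> int" where
  "path_sign ss = prod_list ss"

definition internal_vertices :: "'v list \<Rightarrow> 'v set" where
  "internal_vertices vs = {vs ! l | l. 0 < l \<and> Suc l < length vs}"

definition upd :: "'v bn \<Rightarrow> 'v \<Rightarrow> 'v config \<Rightarrow> 'v config" where
  "upd f k x = x(k := f x k)"

text \<open>f^{i_1...i_l} = f^{i_l} o ... o f^{i_1}: the first letter is applied first.\<close>
definition upd_word :: "'v bn \<Rightarrow> 'v list \<Rightarrow> 'v config \<Rightarrow> 'v config" where
  "upd_word f w = fold (upd f) w"

definition canalizing_word :: "'v bn \<Rightarrow> 'v \<Rightarrow> bool \<Rightarrow> 'v list \<Rightarrow> 'v config \<Rightarrow> bool" where
  "canalizing_word f i a w b \<longleftrightarrow> distinct w \<and> i \<notin> set w \<and>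
     (\<forall>x. x i = a \<longrightarrow> (\<forall>j \<in> set w. upd_word f w x j = b j))"

end

theory Submission
  imports Defs
begin

text \<open>For the k-th letter j of w, the canalizing property forces f_j to equal b_j on the whole
  subcube where x_i = a and x agrees with b on the letters before j.  Since j is not a source,
  f_j is not constant, so walking from a point outside towards the subcube one coordinate at a
  time, some single flip of a coordinate l fixed by the subcube changes f_j; this flip is an arc
  l \<rightarrow> j whose sign compares the fixed value at l with b_j.  Either l = i, or l is an earlier
  letter, to which a path exists by induction, and appending the arc gives the path to j.\<close>

lemma flip_coordinate:
  assumes "finite I" "\<forall>v. v \<notin> I \<longrightarrow> z v = z' v" "g z' \<noteq> \<beta>" "g z = \<beta>"
  shows "\<exists>l\<in>I. \<exists>y. g y \<noteq> \<beta> \<and> g (y(l := z l)) = \<beta>"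
  using assms
proof (induction I arbitrary: z' rule: finite_induct)
  case empty
  then have "z = z'" by auto
  with empty show ?case by simp
next
  case (insert l I)
  show ?case
  proof (cases "g (z'(l := z l)) = \<beta>")
    case True
    with insert.prems show ?thesis by blast
  next
    case False
    have "\<forall>v. v \<notin> I \<longrightarrow> z v = (z'(l := z l)) v" using insert.prems(1) by simp
    from insert.IH[OF this False insert.prems(3)] show ?thesis by blast
  qed
qed

lemma interaction_digraph_arc:
  assumes "\<not> x l" "f x j \<noteq> f (x(l := True)) j"
  shows "(l, j, if f (x(l := True)) j then 1 else -1) \<in> interaction_digraph f"
  using assms unfolding interaction_digraph_def
  by (cases "f (x(l := True)) j"; simp; blast)

lemma interaction_digraph_arc_of_flip:
  assumes "f y j \<noteq> \<beta>" "f (y(l := c)) j = \<beta>"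
  shows "(l, j, if c = \<beta> then 1 else -1) \<in> interaction_digraph f"
proof -
  define x where "x = y(l := False)"
  have "y l \<noteq> c"
  proof
    assume "y l = c"
    then have "y(l := c) = y" by auto
    with assms show False by simp
  qed
  then have "if c then x = y \<and> x(l := True) = y(l := c) else x = y(l := c) \<and> x(l := True) = y"
    unfolding x_def by (cases c) (auto simp: fun_upd_idem)
  then have "f x j \<noteq> f (x(l := True)) j \<and> f (x(l := True)) j = (c = \<beta>)"
    using assms by (cases c) auto
  with interaction_digraph_arc[of x l f j] show ?thesis by (simp add: x_def)
qed

lemma arc_into_subcube_constant:
  assumes "finite I" "\<And>z. \<forall>v\<in>I. z v = c v \<Longrightarrow> f z j = \<beta>" "f x j \<noteq> \<beta>"
  shows "\<exists>l\<in>I. (l, j, if c l = \<beta> then 1 else -1) \<in> interaction_digraph f"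
proof -
  define z where "z v = (if v \<in> I then c v else x v)" for v
  have "\<forall>v. v \<notin> I \<longrightarrow> z v = x v" by (simp add: z_def)
  moreover have "f z j = \<beta>" by (rule assms(2)) (simp add: z_def)
  ultimately obtain l y where l: "l \<in> I" and "f y j \<noteq> \<beta>" "f (y(l := z l)) j = \<beta>"
    using flip_coordinate[OF assms(1), of z x "\<lambda>y. f y j"] assms(3) by blast
  moreover have "z l = c l" using l by (simp add: z_def)
  ultimately have "(l, j, if c l = \<beta> then 1 else -1) \<in> interaction_digraph f"
    using interaction_digraph_arc_of_flip[of f y j \<beta> l "c l"] by simp
  with l show ?thesis ..
qed

lemma interaction_digraph_nonconstant:
  assumes "(u, j, s) \<in> interaction_digraph f"
  shows "\<exists>x. f x j \<noteq> \<beta>"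
proof -
  from assms obtain x where "f x j \<noteq> f (x(u := True)) j"
    unfolding interaction_digraph_def by auto
  then show ?thesis by metis
qed

lemma upd_word_Nil: "upd_word f [] x = x"
  by (simp add: upd_word_def)

lemma upd_word_Cons: "upd_word f (v # ws) x = upd_word f ws (upd f v x)"
  by (simp add: upd_word_def)

lemma upd_word_append: "upd_word f (u @ v) x = upd_word f v (upd_word f u x)"
  by (simp add: upd_word_def)

lemma upd_word_notin: "v \<notin> set ws \<Longrightarrow> upd_word f ws x v = x v"
  unfolding upd_word_def by (induction ws arbitrary: x) (auto simp: upd_def)

lemma upd_word_nth:
  assumes "distinct w" "k < length w"
  shows "upd_word f w x (w ! k) = f (upd_word f (take k w) x) (w ! k)"
proof -
  have w: "take k w @ w ! k # drop (Suc k) w = w" using assms(2) by (rule id_take_nth_drop[symmetric])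
  have "distinct (take k w @ w ! k # drop (Suc k) w)" using assms(1) by (simp only: w)
  then have "w ! k \<notin> set (drop (Suc k) w)" by simp
  moreover have "upd_word f w x = upd_word f (take k w @ w ! k # drop (Suc k) w) x" by (simp only: w)
  then have "upd_word f w x = upd_word f (drop (Suc k) w) (upd f (w ! k) (upd_word f (take k w) x))"
    by (simp only: upd_word_append upd_word_Cons)
  ultimately show ?thesis by (simp add: upd_word_notin upd_def)
qed

lemma canalizing_word_prefix_fixed:
  assumes "canalizing_word f i a w b" "k \<le> length w" "z i = a" "\<forall>v\<in>set (take k w). z v = b v"
  shows "upd_word f (take k w) z = z"
  using assms(2,4)
proof (induction k)
  case 0
  show ?case by (simp add: upd_word_Nil)
next
  case (Suc k)
  then have k: "k < length w" by simp
  have take: "take (Suc k) w = take k w @ [w ! k]" using k by (rule take_Suc_conv_app_nth)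
  with Suc have fixed: "upd_word f (take k w) z = z" by simp
  have "upd_word f w z (w ! k) = b (w ! k)" "distinct w"
    using assms(1,3) k unfolding canalizing_word_def by auto
  with upd_word_nth[of w k f z] have "f z (w ! k) = b (w ! k)" using k fixed by simp
  moreover have "z (w ! k) = b (w ! k)" using Suc.prems(2) take by simp
  ultimately have "upd f (w ! k) z = z" by (simp add: upd_def fun_upd_idem)
  then show ?case by (simp add: take upd_word_append upd_word_Cons upd_word_Nil fixed)
qed

lemma canalizing_word_nth:
  assumes "canalizing_word f i a w b" "k < length w" "z i = a" "\<forall>v\<in>set (take k w). z v = b v"
  shows "f z (w ! k) = b (w ! k)"
proof -
  have "upd_word f w z (w ! k) = b (w ! k)" "distinct w"
    using assms(1-3) unfolding canalizing_word_def by auto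
  moreover have "upd_word f (take k w) z = z"
    using canalizing_word_prefix_fixed[OF assms(1) _ assms(3,4)] assms(2) by simp
  ultimately show ?thesis using upd_word_nth[of w k f z] assms(2) by simp
qed

lemma canalizing_word_arc:
  assumes "bn_on f E" "canalizing_word f i a w b" "k < length w" "\<not> is_source E (w ! k)"
  shows "\<exists>l\<in>insert i (set (take k w)). (l, w ! k, if (b(i := a)) l = b (w ! k) then 1 else -1) \<in> E"
proof -
  have E: "E = interaction_digraph f" using assms(1) by (simp add: bn_on_def)
  obtain u s where "(u, w ! k, s) \<in> interaction_digraph f"
    using assms(4) unfolding is_source_def E by blast
  then obtain x where x: "f x (w ! k) \<noteq> b (w ! k)"
    using interaction_digraph_nonconstant[of u "w ! k" s f "b (w ! k)"] by blast
  have "i \<notin> set w" using assms(2) by (simp add: canalizing_word_def)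
  have const: "f z (w ! k) = b (w ! k)" if z: "\<forall>v\<in>insert i (set (take k w)). z v = (b(i := a)) v" for z
  proof (rule canalizing_word_nth[OF assms(2,3)])
    show "z i = a" using z by simp
    show "\<forall>v\<in>set (take k w). z v = b v" using z \<open>i \<notin> set w\<close> by (auto dest: in_set_takeD)
  qed
  have "finite (insert i (set (take k w)))" by simp
  from arc_into_subcube_constant[of _ "b(i := a)" f "w ! k" "b (w ! k)" x, OF this const x]
  show ?thesis unfolding E .
qed

lemma is_path_singleton: "is_path E [v] []"
  by (simp add: is_path_def)

lemma is_path_snoc:
  assumes "is_path E vs ss" "j \<notin> set vs" "(last vs, j, s) \<in> E"
  shows "is_path E (vs @ [j]) (ss @ [s])"
  using assms unfolding is_path_def
  by (auto simp: nth_append last_conv_nth less_Suc_eq)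

lemma internal_vertices_subset_tl: "internal_vertices vs \<subseteq> set (tl vs)"
  unfolding internal_vertices_def by (cases vs) (auto simp: nth_Cons')

lemma bool_sign_mult:
  "(if a = b then 1 else -1) * (if b = c then 1 else -1) = (if a = (c::bool) then 1 else (-1::int))"
  by (cases a; cases b; cases c) simp_all

lemma canalizing_word_signed_path:
  assumes "bn_on f E" "canalizing_word f i a w b" "\<forall>k\<in>set w. \<not> is_source E k" "k < length w"
  shows "\<exists>vs ss. is_path E vs ss \<and> hd vs = i \<and> last vs = w ! k \<and>
           set (tl vs) \<subseteq> set (take (Suc k) w) \<and> path_sign ss = (if a = b (w ! k) then 1 else -1)"
  using assms(4)
proof (induction k rule: less_induct)
  case (less k)
  define j where "j = w ! k"
  define c where "c = b(i := a)"
  have w: "distinct w" "i \<notin> set w" using assms(2) by (simp_all add: canalizing_word_def)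
  have "\<not> is_source E (w ! k)" using assms(3) less.prems by simp
  from canalizing_word_arc[OF assms(1,2) less.prems this]
  obtain l where l: "l \<in> insert i (set (take k w))" and arc: "(l, j, if c l = b j then 1 else -1) \<in> E"
    unfolding j_def c_def by blast
  have "\<exists>vs ss. is_path E vs ss \<and> hd vs = i \<and> last vs = l \<and>
          set (tl vs) \<subseteq> set (take k w) \<and> path_sign ss = (if a = c l then 1 else -1)"
  proof (cases "l = i")
    case True
    with is_path_singleton show ?thesis by (fastforce simp: c_def path_sign_def)
  next
    case False
    with l less.prems obtain m where m: "m < k" "l = w ! m" by (auto simp: in_set_conv_nth)
    moreover have "set (take (Suc m) w) \<subseteq> set (take k w)" using m by (simp add: set_take_subset_set_take)
    ultimately show ?thesis using less.IH[of m] less.prems False by (fastforce simp: c_def)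
  qed
  then obtain vs ss where p: "is_path E vs ss" "hd vs = i" "last vs = l"
    "set (tl vs) \<subseteq> set (take k w)" "path_sign ss = (if a = c l then 1 else -1)" by blast
  have "vs \<noteq> []" using p(1) by (simp add: is_path_def)
  then have vs: "set vs = insert i (set (tl vs))" using p(2) by (cases vs) auto
  have "j \<notin> set (take k w)" using w(1) less.prems
    by (auto simp: j_def in_set_conv_nth nth_eq_iff_index_eq)
  moreover have "j \<noteq> i" using w(2) less.prems by (auto simp: j_def)
  ultimately have "j \<notin> set vs" using vs p(4) by auto
  with p arc have "is_path E (vs @ [j]) (ss @ [if c l = b j then 1 else -1])"
    by (simp add: is_path_snoc)
  moreover have "set (tl (vs @ [j])) \<subseteq> set (take (Suc k) w)"
    using p(4) \<open>vs \<noteq> []\<close> less.prems by (auto simp: j_def take_Suc_conv_app_nth)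
  moreover have "path_sign (ss @ [if c l = b j then 1 else -1]) = (if a = b j then 1 else -1)"
    using p(5) bool_sign_mult[of a "c l" "b j"] by (simp add: path_sign_def)
  ultimately show ?case using p(2) \<open>vs \<noteq> []\<close> unfolding j_def by fastforce
qed

theorem lemma6:
  fixes E :: "('v::finite) sdigraph" and f :: "'v bn"
    and i :: 'v and a :: bool and w :: "'v list" and b :: "'v config"
  assumes "signed_digraph E"
    and "bn_on f E"
    and "canalizing_word f i a w b"
    and "\<forall>k \<in> set w. \<not> is_source E k"
  shows "\<forall>j \<in> set w. \<exists>vs ss. is_path E vs ss \<and> hd vs = i \<and> last vs = j \<and>
           internal_vertices vs \<subseteq> set w \<and>
           path_sign ss = (if a = b j then 1 else -1)"
proof
  fix j assume "j \<in> set w"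
  then obtain k where k: "k < length w" "j = w ! k" by (auto simp: in_set_conv_nth)
  from canalizing_word_signed_path[OF assms(2-4) k(1)] obtain vs ss where
    path: "is_path E vs ss" "hd vs = i" "last vs = j" and
    tl: "set (tl vs) \<subseteq> set (take (Suc k) w)" and sign: "path_sign ss = (if a = b j then 1 else -1)"
    using k(2) by blast
  have "internal_vertices vs \<subseteq> set w"
    using tl internal_vertices_subset_tl[of vs] set_take_subset[of "Suc k" w] by blast
  with path sign show "\<exists>vs ss. is_path E vs ss \<and> hd vs = i \<and> last vs = j \<and>
      internal_vertices vs \<subseteq> set w \<and> path_sign ss = (if a = b j then 1 else -1)" by blast
qed

end
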